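(* Let $\mathscr D:\mathscr N=\mathscr N_1\cup\cdots\cup\mathscr N_k$ be a $\mathscr C_{\mathscr D}$-decomposition of a chemical reaction network $\mathscr N$ with $\mathscr C_{\mathscr D}=\{y_1,y_2\}$ and $\ell>2$, where $\ell$ is the number of linkage classes of $\mathscr N$. If there is at most one path in $\mathscr N$ that connects $y_1$ and $y_2$, then $\mathscr D$ is incidence independent.
   Context: A CRN $\mathscr N=(\mathscr S,\mathscr C,\mathscr R)$ is viewed as a directed graph on its complexes with arcs its reactions; paths are paths in the underlying undirected graph and linkage classes are its connected components. A decomposition $\mathscr N=\mathscr N_1\cup\cdots\cup\mathscr N_k$ ($k\ge 2$) is given by a partition $\{\mathscr R_1,\dots,\mathscr R_k\}$ of the reaction set; the subnetwork $\mathscr N_i$ has reactions $\mathscr R_i$ and complex set $\mathscr C_i$ consisting of complexes occurring in reactions of $\mathscr R_i$. The set $\mathscr C_{\mathscr D}$ of common complexes consists of the complexes lying in the complex sets of at least two distinct subnetworks. A $\mathscr C_{\mathscr D}$-decomposition is one with $\mathscr C_i\cap\mathscr C_j=\mathscr C_{\mathscr D}$ for all $i\ne j$. With $n,\ell$ the numbers of complexes and linkage classes of $\mathscr N$ and $n_i,\ell_i$ those of $\mathscr N_i$, the decomposition is incidence independent if the image of the incidence map of $\mathscr N$ (the linear map $\mathbb R^{\mathscr R}\to\mathbb R^{\mathscr C}$ sending a reaction $y\to y'$ to $\omega_{y'}-\omega_y$) is the direct sum of the images of the incidence maps of the $\mathscr N_i$, equivalently $n-\ell=\sum_i(n_i-\ell_i)$.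 *)

theory Defs
  imports Complex_Main
begin

text \<open>A CRN is represented by its finite set of reactions R, a reaction y \<rightarrow> y'
  being the pair (y, y') with y \<noteq> y'.\<close>

definition crn :: "('c \<times> 'c) set \<Rightarrow> bool" where
  "crn R \<longleftrightarrow> finite R \<and> (\<forall>(y, y') \<in> R. y \<noteq> y')"

definition complexes :: "('c \<times> 'c) set \<Rightarrow> 'c set" where
  "complexes R = fst ` R \<union> snd ` R"

definition linkage_classes :: "('c \<times> 'c) set \<Rightarrow> 'c set set" where
  "linkage_classes R = complexes R //
     {(x, y). x \<in> complexes R \<and> y \<in> complexes R \<and> (x, y) \<in> (R \<union> R\<inverse>)\<^sup>*}"

text \<open>Image of the incidence map R^R \<rightarrow> R^C, (y \<rightarrow> y') \<mapsto> \<omega>_{y'} - \<omega>_y,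
  vectors in R^C being represented as functions 'c \<Rightarrow> real.\<close>
definition omega :: "'c \<Rightarrow> 'c \<Rightarrow> real" where
  "omega y = (\<lambda>c. if c = y then 1 else 0)"

definition incidence_image :: "('c \<times> 'c) set \<Rightarrow> ('c \<Rightarrow> real) set" where
  "incidence_image R =
     {(\<lambda>c. \<Sum>r\<in>R. \<alpha> r * (omega (snd r) c - omega (fst r) c)) | \<alpha>. True}"

definition decomposition :: "('c \<times> 'c) set \<Rightarrow> nat \<Rightarrow> (nat \<Rightarrow> ('c \<times> 'c) set) \<Rightarrow> bool" where
  "decomposition R k Rs \<longleftrightarrow> k \<ge> 2 \<and> (\<forall>i<k. Rs i \<noteq> {}) \<and>
     (\<forall>i<k. \<forall>j<k. i \<noteq> j \<longrightarrow> Rs i \<inter> Rs j = {}) \<and> (\<Union>i<k. Rs i) = R"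

definition common_complexes :: "nat \<Rightarrow> (nat \<Rightarrow> ('c \<times> 'c) set) \<Rightarrow> 'c set" where
  "common_complexes k Rs =
     {y. \<exists>i<k. \<exists>j<k. i \<noteq> j \<and> y \<in> complexes (Rs i) \<and> y \<in> complexes (Rs j)}"

definition CD_decomposition :: "('c \<times> 'c) set \<Rightarrow> nat \<Rightarrow> (nat \<Rightarrow> ('c \<times> 'c) set) \<Rightarrow> bool" where
  "CD_decomposition R k Rs \<longleftrightarrow> decomposition R k Rs \<and>
     (\<forall>i<k. \<forall>j<k. i \<noteq> j \<longrightarrow> complexes (Rs i) \<inter> complexes (Rs j) = common_complexes k Rs)"

text \<open>Incidence independence: Im of the incidence map of R is the direct sum of the
  images of the incidence maps of the subnetworks.\<close>
definition incidence_independent :: "('c \<times> 'c) set \<Rightarrow> nat \<Rightarrow> (nat \<Rightarrow> ('c \<times> 'c) set) \<Rightarrow> bool" where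
  "incidence_independent R k Rs \<longleftrightarrow>
     incidence_image R = {(\<lambda>c. \<Sum>i<k. v i c) | v. \<forall>i<k. v i \<in> incidence_image (Rs i)} \<and>
     (\<forall>v. (\<forall>i<k. v i \<in> incidence_image (Rs i)) \<and> (\<forall>c. (\<Sum>i<k. v i c) = 0) \<longrightarrow> (\<forall>i<k. \<forall>c. v i c = 0))"

text \<open>Paths are identified by their vertex and reaction sequences.\<close>
definition is_path :: "('c \<times> 'c) set \<Rightarrow> 'c \<Rightarrow> 'c \<Rightarrow> 'c list \<Rightarrow> ('c \<times> 'c) list \<Rightarrow> bool" where
  "is_path R y y' vs es \<longleftrightarrow> vs \<noteq> [] \<and> hd vs = y \<and> last vs = y' \<and> distinct vs \<and>
     length es = length vs - 1 \<and>
     (\<forall>j<length es. es ! j \<in> R \<and>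
        (es ! j = (vs ! j, vs ! Suc j) \<or> es ! j = (vs ! Suc j, vs ! j)))"

end

theory Submission
  imports Defs
begin

text \<open>The image of the incidence map of a network is always the sum of the images for
  the parts of a decomposition; the point is that the sum is direct. Let vectors
  \<open>v\<^sub>i\<close> in the images of the parts sum to zero. A complex outside
  \<open>\<C>\<^sub>D = {y\<^sub>1, y\<^sub>2}\<close> occurs in at most one part, so every \<open>v\<^sub>i\<close> is supported on
  \<open>{y\<^sub>1, y\<^sub>2}\<close>. An incidence vector sums to zero over every linkage class, hence
  \<open>v\<^sub>i = 0\<close> unless \<open>y\<^sub>1\<close> and \<open>y\<^sub>2\<close> are linked within the part. Two parts linking them
  would yield two paths in the whole network with first reactions in disjoint parts,
  so at most one \<open>v\<^sub>i\<close> can be nonzero, and that one vanishes because the sum does.\<close>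

abbreviation linked :: "('c \<times> 'c) set \<Rightarrow> 'c \<Rightarrow> 'c \<Rightarrow> bool" where
  "linked S a b \<equiv> (a, b) \<in> (S \<union> S\<inverse>)\<^sup>*"

lemma linked_sym: "linked S a b \<Longrightarrow> linked S b a"
  by (meson sym_Un_converse sym_rtrancl symD)

definition incidence_map :: "('c \<times> 'c) set \<Rightarrow> ('c \<times> 'c \<Rightarrow> real) \<Rightarrow> 'c \<Rightarrow> real" where
  "incidence_map S \<alpha> = (\<lambda>c. \<Sum>r\<in>S. \<alpha> r * (omega (snd r) c - omega (fst r) c))"

lemma incidence_image_eq_range: "incidence_image S = range (incidence_map S)"
  by (auto simp: incidence_image_def incidence_map_def)

lemma incidence_map_UN_disjoint:
  fixes k :: nat
  assumes "\<forall>i<k. finite (Rs i)" "\<forall>i<k. \<forall>j<k. i \<noteq> j \<longrightarrow> Rs i \<inter> Rs j = {}"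
  shows "incidence_map (\<Union>i<k. Rs i) \<alpha> c = (\<Sum>i<k. incidence_map (Rs i) \<alpha> c)"
  unfolding incidence_map_def by (rule sum.UNION_disjoint) (use assms in auto)

lemma incidence_image_decomposition:
  assumes "finite R" "decomposition R k Rs"
  shows "incidence_image R = {(\<lambda>c. \<Sum>i<k. v i c) | v. \<forall>i<k. v i \<in> incidence_image (Rs i)}"
proof -
  have R: "R = (\<Union>i<k. Rs i)" and disj: "\<forall>i<k. \<forall>j<k. i \<noteq> j \<longrightarrow> Rs i \<inter> Rs j = {}"
    using assms(2) by (auto simp: decomposition_def)
  have fin: "\<forall>i<k. finite (Rs i)"
    using assms(1) R by (metis UN_upper finite_subset lessThan_iff)
  have map_split: "incidence_map R \<alpha> = (\<lambda>c. \<Sum>i<k. incidence_map (Rs i) \<alpha> c)" for \<alpha>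
    using incidence_map_UN_disjoint[OF fin disj] R by auto
  have glue: "\<exists>\<alpha>. \<forall>i<k. incidence_map (Rs i) (A i) = incidence_map (Rs i) \<alpha>" for A
  proof -
    define \<alpha> where "\<alpha> r = A (THE i. i < k \<and> r \<in> Rs i) r" for r
    have "\<alpha> r = A i r" if "i < k" "r \<in> Rs i" for i r
      unfolding \<alpha>_def using that disj by (subst the_equality) blast+
    then have "\<forall>i<k. incidence_map (Rs i) (A i) = incidence_map (Rs i) \<alpha>"
      by (auto simp: incidence_map_def)
    then show ?thesis by blast
  qed
  show ?thesis
  proof (intro equalityI subsetI)
    fix w assume "w \<in> incidence_image R"
    then obtain \<alpha> where "w = incidence_map R \<alpha>"
      by (auto simp: incidence_image_eq_range)
    then show "w \<in> {(\<lambda>c. \<Sum>i<k. v i c) | v. \<forall>i<k. v i \<in> incidence_image (Rs i)}"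
      unfolding map_split incidence_image_eq_range
      by (auto intro!: exI[of _ "\<lambda>i. incidence_map (Rs i) \<alpha>"])
  next
    fix w assume "w \<in> {(\<lambda>c. \<Sum>i<k. v i c) | v. \<forall>i<k. v i \<in> incidence_image (Rs i)}"
    then obtain v where w: "w = (\<lambda>c. \<Sum>i<k. v i c)"
      and "\<forall>i<k. v i \<in> incidence_image (Rs i)"
      by blast
    then have "\<forall>i<k. \<exists>\<alpha>. v i = incidence_map (Rs i) \<alpha>"
      by (auto simp: incidence_image_eq_range)
    then obtain A where "\<forall>i<k. v i = incidence_map (Rs i) (A i)"
      by metis
    with glue obtain \<alpha> where "\<forall>i<k. v i = incidence_map (Rs i) \<alpha>"
      by metis
    then have "w = incidence_map R \<alpha>"
      unfolding w map_split by simp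
    then show "w \<in> incidence_image R"
      by (simp add: incidence_image_eq_range)
  qed
qed

lemma incidence_image_vanishes_outside:
  assumes "v \<in> incidence_image S" "c \<notin> complexes S"
  shows "v c = 0"
proof -
  have "omega (snd r) c = 0 \<and> omega (fst r) c = 0" if "r \<in> S" for r
    using assms(2) that by (force simp: omega_def complexes_def)
  with assms(1) show ?thesis
    by (auto simp: incidence_image_eq_range incidence_map_def intro!: sum.neutral)
qed

lemma finite_linked: "finite S \<Longrightarrow> finite {c. linked S a c}"
proof (rule finite_subset)
  show "{c. linked S a c} \<subseteq> insert a (complexes S)"
  proof
    fix c assume "c \<in> {c. linked S a c}"
    then have "linked S a c" by simp
    then show "c \<in> insert a (complexes S)"
      by (cases rule: rtranclE) (force simp: complexes_def)+
  qed
qed (simp add: complexes_def)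

lemma incidence_image_sum_linked:
  assumes "finite S" "v \<in> incidence_image S"
  shows "(\<Sum>c\<in>{c. linked S a c}. v c) = 0"
proof -
  define L where "L = {c. linked S a c}"
  have "finite L"
    using finite_linked[OF assms(1)] by (simp add: L_def)
  then have omega_L: "(\<Sum>c\<in>L. omega y c) = (if y \<in> L then 1 else 0)" for y
    by (simp add: omega_def)
  have closed: "fst r \<in> L \<longleftrightarrow> snd r \<in> L" if "r \<in> S" for r
    using that unfolding L_def by (cases r) (auto intro: rtrancl_into_rtrancl)
  obtain \<alpha> where "v = incidence_map S \<alpha>"
    using assms(2) by (auto simp: incidence_image_eq_range)
  then have "(\<Sum>c\<in>L. v c) = (\<Sum>r\<in>S. \<Sum>c\<in>L. \<alpha> r * (omega (snd r) c - omega (fst r) c))"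
    unfolding incidence_map_def by (simp add: sum.swap[of _ L])
  also have "\<dots> = (\<Sum>r\<in>S. \<alpha> r * ((\<Sum>c\<in>L. omega (snd r) c) - (\<Sum>c\<in>L. omega (fst r) c)))"
    by (simp add: right_diff_distrib sum_subtractf sum_distrib_left)
  also have "\<dots> = 0"
    using closed by (intro sum.neutral) (auto simp: omega_L)
  finally show ?thesis
    by (simp add: L_def)
qed

lemma incidence_image_vanishes_unlinked:
  assumes "finite S" "v \<in> incidence_image S" "\<forall>c. c \<notin> {a, b} \<longrightarrow> v c = 0"
    and "\<not> linked S a b"
  shows "v a = 0"
proof -
  have "(\<Sum>c\<in>{c. linked S a c}. v c) = (\<Sum>c\<in>{c. linked S a c}. if c = a then v a else 0)"
    using assms(3,4) by (intro sum.cong) auto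
  also have "\<dots> = v a"
    using finite_linked[OF assms(1)] by simp
  finally show ?thesis
    using incidence_image_sum_linked[OF assms(1,2)] by simp
qed

lemma sum_eq_zero_imp_term_zero:
  assumes "finite A" "i \<in> A" "sum f A = 0" "\<forall>j\<in>A - {i}. f j = 0"
  shows "f i = 0"
  using sum.mono_neutral_right[of A "{i}" f] assms by simp

lemma incidence_vectors_vanish_outside_common_complexes:
  assumes v: "\<forall>j<k. v j \<in> incidence_image (Rs j)" and "(\<Sum>j<k. v j c) = 0"
    and "i < k" "c \<notin> common_complexes k Rs"
  shows "v i c = 0"
proof (cases "c \<in> complexes (Rs i)")
  case True
  have others: "v j c = 0" if "j \<in> {..<k} - {i}" for j
  proof -
    have "c \<notin> complexes (Rs j)"
      using True that assms(3,4) unfolding common_complexes_def by blast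
    then show ?thesis
      using incidence_image_vanishes_outside[of "v j" "Rs j" c] v that by simp
  qed
  show ?thesis
    by (rule sum_eq_zero_imp_term_zero[of "{..<k}" i "\<lambda>j. v j c"])
      (use others assms(2,3) in auto)
next
  case False
  then show ?thesis
    using incidence_image_vanishes_outside[of "v i" "Rs i" c] v \<open>i < k\<close> by simp
qed

lemma zero_sum_incidence_vectors_vanish:
  assumes "finite R" "decomposition R k Rs" "common_complexes k Rs = {a, b}"
    and one_linking_part: "\<forall>i<k. \<forall>j<k. linked (Rs i) a b \<and> linked (Rs j) a b \<longrightarrow> i = j"
    and v: "\<forall>i<k. v i \<in> incidence_image (Rs i)" and zero_sum: "\<forall>c. (\<Sum>i<k. v i c) = 0"
    and "i < k"
  shows "v i c = 0"
proof -
  have support: "\<forall>c. c \<notin> {a, b} \<longrightarrow> v j c = 0" if "j < k" for j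
    using incidence_vectors_vanish_outside_common_complexes[OF v zero_sum[rule_format] that]
      assms(3) by simp
  have unlinked: "v j c = 0" if "j < k" "\<not> linked (Rs j) a b" for j c
  proof -
    have fin: "finite (Rs j)"
      using assms(1,2) \<open>j < k\<close> by (metis decomposition_def UN_upper finite_subset lessThan_iff)
    have vj: "v j \<in> incidence_image (Rs j)"
      using v \<open>j < k\<close> by blast
    have "\<not> linked (Rs j) b a"
      using that(2) linked_sym by metis
    moreover have "\<forall>c. c \<notin> {b, a} \<longrightarrow> v j c = 0"
      using support[OF \<open>j < k\<close>] by blast
    ultimately have "v j b = 0"
      by (rule incidence_image_vanishes_unlinked[OF fin vj, rotated])
    moreover have "v j a = 0"
      by (rule incidence_image_vanishes_unlinked[OF fin vj support[OF \<open>j < k\<close>] that(2)])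
    ultimately show ?thesis
      using support[OF \<open>j < k\<close>] by (cases "c \<in> {a, b}") auto
  qed
  show ?thesis
  proof (cases "linked (Rs i) a b")
    case True
    have others: "v j c = 0" if "j \<in> {..<k} - {i}" for j
    proof (rule unlinked)
      show "j < k" using that by simp
      show "\<not> linked (Rs j) a b"
        using one_linking_part True \<open>i < k\<close> that by blast
    qed
    show ?thesis
      by (rule sum_eq_zero_imp_term_zero[of "{..<k}" i "\<lambda>j. v j c"])
        (use others zero_sum \<open>i < k\<close> in auto)
  next
    case False
    then show ?thesis
      by (rule unlinked[OF \<open>i < k\<close>])
  qed
qed

lemma is_path_mono: "is_path S a b vs es \<Longrightarrow> S \<subseteq> T \<Longrightarrow> is_path T a b vs es"
  unfolding is_path_def by blast

lemma is_path_take: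
  assumes "is_path S a b vs es" "m < length vs"
  shows "is_path S a (vs ! m) (take (Suc m) vs) (take m es)"
proof -
  have "last (take (Suc m) vs) = vs ! m"
    using assms(2) by (simp add: take_Suc_conv_app_nth)
  with assms show ?thesis
    unfolding is_path_def by auto
qed

lemma is_path_snoc:
  assumes "is_path S a b vs es" "e \<in> S" "e = (b, c) \<or> e = (c, b)" "c \<notin> set vs"
  shows "is_path S a c (vs @ [c]) (es @ [e])"
proof -
  have len: "length es = length vs - 1" "vs \<noteq> []" "vs ! (length vs - 1) = b"
    using assms(1) by (auto simp: is_path_def last_conv_nth)
  have "\<forall>j<length (es @ [e]). (es @ [e]) ! j \<in> S \<and>
      ((es @ [e]) ! j = ((vs @ [c]) ! j, (vs @ [c]) ! Suc j) \<or>
       (es @ [e]) ! j = ((vs @ [c]) ! Suc j, (vs @ [c]) ! j))"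
  proof (intro allI impI)
    fix j assume "j < length (es @ [e])"
    then consider "j < length es" | "j = length es"
      by fastforce
    then show "(es @ [e]) ! j \<in> S \<and>
        ((es @ [e]) ! j = ((vs @ [c]) ! j, (vs @ [c]) ! Suc j) \<or>
         (es @ [e]) ! j = ((vs @ [c]) ! Suc j, (vs @ [c]) ! j))"
      by cases (use assms len in \<open>auto simp: is_path_def nth_append\<close>)
  qed
  with assms len show ?thesis
    unfolding is_path_def by auto
qed

lemma linked_imp_is_path:
  assumes "linked S a b"
  shows "\<exists>vs es. is_path S a b vs es"
  using assms
proof (induction rule: rtrancl_induct)
  case base
  have "is_path S a a [a] []"
    by (simp add: is_path_def)
  then show ?case by blast
next
  case (step b c)
  from step.IH obtain vs es where path: "is_path S a b vs es"
    by blast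
  show ?case
  proof (cases "c \<in> set vs")
    case True
    then obtain m where "m < length vs" "vs ! m = c"
      by (auto simp: in_set_conv_nth)
    then show ?thesis
      using is_path_take[OF path] by metis
  next
    case False
    from step.hyps(2) obtain e where "e \<in> S" "e = (b, c) \<or> e = (c, b)"
      by auto
    then show ?thesis
      using is_path_snoc[OF path _ _ False] by blast
  qed
qed

lemma is_path_first_edge:
  assumes "is_path S a b vs es" "a \<noteq> b"
  shows "es ! 0 \<in> S"
proof -
  have "length vs \<noteq> 1"
    using assms by (auto simp: is_path_def length_Suc_conv)
  then show ?thesis
    using assms(1) unfolding is_path_def by (cases vs) auto
qed

lemma unique_path_imp_one_linking_part:
  assumes "decomposition R k Rs" "a \<noteq> b"
    and unique_path: "\<forall>vs es vs' es'. is_path R a b vs es \<and> is_path R a b vs' es'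
           \<longrightarrow> vs = vs' \<and> es = es'"
  shows "\<forall>i<k. \<forall>j<k. linked (Rs i) a b \<and> linked (Rs j) a b \<longrightarrow> i = j"
proof (intro allI impI)
  fix i j assume "i < k" "j < k" and linked: "linked (Rs i) a b \<and> linked (Rs j) a b"
  then have sub: "Rs i \<subseteq> R" "Rs j \<subseteq> R"
    using assms(1) by (auto simp: decomposition_def)
  obtain vs es where path: "is_path (Rs i) a b vs es"
    using linked_imp_is_path[OF conjunct1[OF linked]] by blast
  obtain vs' es' where path': "is_path (Rs j) a b vs' es'"
    using linked_imp_is_path[OF conjunct2[OF linked]] by blast
  have "es = es'"
    using unique_path is_path_mono[OF path sub(1)] is_path_mono[OF path' sub(2)] by blast
  then have "es ! 0 \<in> Rs i \<inter> Rs j"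
    using is_path_first_edge[OF path assms(2)] is_path_first_edge[OF path' assms(2)] by simp
  then show "i = j"
    using assms(1) \<open>i < k\<close> \<open>j < k\<close> by (auto simp: decomposition_def)
qed

theorem proposition7:
  fixes R :: "('c \<times> 'c) set" and k :: nat and Rs :: "nat \<Rightarrow> ('c \<times> 'c) set"
    and y1 y2 :: 'c
  assumes "crn R"
    and "CD_decomposition R k Rs"
    and "y1 \<noteq> y2"
    and "common_complexes k Rs = {y1, y2}"
    and "card (linkage_classes R) > 2"
    and "\<forall>vs es vs' es'. is_path R y1 y2 vs es \<and> is_path R y1 y2 vs' es'
           \<longrightarrow> vs = vs' \<and> es = es'"
  shows "incidence_independent R k Rs"
proof -
  have fin: "finite R" and dec: "decomposition R k Rs"
    using assms(1,2) by (auto simp: crn_def CD_decomposition_def)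
  have one_linking_part: "\<forall>i<k. \<forall>j<k. linked (Rs i) y1 y2 \<and> linked (Rs j) y1 y2 \<longrightarrow> i = j"
    using unique_path_imp_one_linking_part[OF dec assms(3,6)] .
  show ?thesis
    unfolding incidence_independent_def
  proof (intro conjI allI impI)
    show "incidence_image R = {(\<lambda>c. \<Sum>i<k. v i c) | v. \<forall>i<k. v i \<in> incidence_image (Rs i)}"
      by (rule incidence_image_decomposition[OF fin dec])
    fix v i c
    assume "(\<forall>i<k. v i \<in> incidence_image (Rs i)) \<and> (\<forall>c. (\<Sum>i<k. v i c) = 0)" "i < k"
    then show "v i c = 0"
      using zero_sum_incidence_vectors_vanish[OF fin dec assms(4) one_linking_part, of v i c]
      by blast
  qed
qed

end
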